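(* Let $\alpha>0$, $r>0$, $L>0$, $f\in\mathcal{A}_{\alpha,r}(L)$, and assume $\Phi^{K_n}\in\mathbb{L}_2(\mathbb{R})$ for every $h_n>0$. Then, as $h_n\to0$, $$\sup_{x\in\mathbb{R}}\big|E_f\hat f_n(x)-f(x)\big|^2\le\frac{L}{2\pi\alpha r}h_n^{r-1}\exp\Big(-\frac{2\alpha}{h_n^r}\Big)(1+o(1)),$$ and for every $h_n>0$, $$\|E_f\hat f_n-f\|_2^2\le L\exp\Big(-\frac{2\alpha}{h_n^r}\Big).$$
   Context: Observations $Y_i=X_i+\varepsilon_i$, $i=1,\dots,n$, with $X_i$ i.i.d. with density $f$, $\varepsilon_i$ i.i.d. with known density $f^\varepsilon$ and characteristic function $\Phi^\varepsilon$, independent of the $X_i$; $E_f$ is expectation under the law of the $Y_i$ when $X_i$ have density $f$. $\Phi^g(u)=\int g(x)e^{ixu}dx$. $\mathcal{A}_{\alpha,r}(L)$ is the set of probability densities $f$ on $\mathbb{R}$ with $\int|\Phi^f(u)|^2e^{2\alpha|u|^r}du\le2\pi L$. Kernel estimator: $\hat f_n(x)=\frac{1}{nh_n}\sum_{i=1}^nK_n\big(\frac{x-Y_i}{h_n}\big)$, $h_n>0$, with $K_n$ the inverse Fourier transform of $\Phi^{K_n}(u)=I(|u|\le1)/\Phi^\varepsilon(u/h_n)$. *)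

theory Defs
  imports "HOL-Analysis.Analysis"
begin

definition prob_density :: "(real \<Rightarrow> real) \<Rightarrow> bool" where
  "prob_density g \<longleftrightarrow> g \<in> borel_measurable borel \<and> (\<forall>x. 0 \<le> g x)
      \<and> integrable lborel g \<and> integral\<^sup>L lborel g = 1"

definition char_fun :: "(real \<Rightarrow> real) \<Rightarrow> real \<Rightarrow> complex" where
  "char_fun g u = (\<integral>x. complex_of_real (g x) * exp (\<i> * complex_of_real (x * u)) \<partial>lborel)"

definition class_A :: "real \<Rightarrow> real \<Rightarrow> real \<Rightarrow> (real \<Rightarrow> real) set" where
  "class_A \<alpha> r L = {f. prob_density f \<and>
     (\<integral>\<^sup>+u. ennreal ((cmod (char_fun f u))\<^sup>2 * exp (2 * \<alpha> * (\<bar>u\<bar> powr r))) \<partial>lborel)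
        \<le> ennreal (2 * pi * L)}"

definition PhiK :: "(real \<Rightarrow> real) \<Rightarrow> real \<Rightarrow> real \<Rightarrow> complex" where
  "PhiK fe h u = (if \<bar>u\<bar> \<le> 1 then 1 / char_fun fe (u / h) else 0)"

definition Kn :: "(real \<Rightarrow> real) \<Rightarrow> real \<Rightarrow> real \<Rightarrow> complex" where
  "Kn fe h z = (1 / (2 * pi)) * (\<integral>u. exp (- \<i> * complex_of_real (u * z)) * PhiK fe h u \<partial>lborel)"

definition law_Y :: "(real \<Rightarrow> real) \<Rightarrow> (real \<Rightarrow> real) \<Rightarrow> real measure" where
  "law_Y f fe = distr (density lborel (\<lambda>x. ennreal (f x)) \<Otimes>\<^sub>M density lborel (\<lambda>e. ennreal (fe e)))
                      lborel (\<lambda>(x, e). x + e)"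

definition E_fhat :: "(real \<Rightarrow> real) \<Rightarrow> (real \<Rightarrow> real) \<Rightarrow> real \<Rightarrow> real \<Rightarrow> complex" where
  "E_fhat f fe h x = (1 / complex_of_real h) * (\<integral>y. Kn fe h ((x - y) / h) \<partial>law_Y f fe)"

end

theory Submission
  imports Defs "HOL-Probability.Probability" "HOL-Real_Asymp.Real_Asymp"
begin

(* Integrating the kernel against the law of Y = X + eps (Fubini) gives, for h > 0,
   E_f fhat(x) = (1/(2 pi)) * integral over |u| <= 1/h of exp(-iux) Phi^f(u) du:
   the factor 1/Phi^eps(u/h) in the kernel cancels the characteristic function of the noise.
   On the class A_{alpha,r}(L) the characteristic function Phi^f is integrable (Cauchy-Schwarz
   against the weight exp(2 alpha |u|^r)), so Fourier inversion, obtained from Levy's inversion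
   formula and the continuity of f, writes f(x) as the same integral over all u. The bias is
   therefore minus the integral over the tail |u| > 1/h.
   Pointwise, Cauchy-Schwarz bounds its square by (L/(2 pi)) times the integral of
   exp(-2 alpha |u|^r) over the tail, which is h^(r-1) exp(-2 alpha/h^r)/(alpha r) (1 + O(h^r)),
   by comparing the integrand with the derivative of v^(1-r) exp(-2 alpha v^r).
   In L2, the Plancherel inequality (proved by Gaussian damping, a Schur test and Fatou's lemma)
   bounds the squared norm of the bias by (1/(2 pi)) times the integral of |Phi^f|^2 over the tail,
   and there the weight is at least exp(2 alpha/h^r). *)

lemma borel_measurable_cnj[measurable]: "cnj \<in> borel_measurable borel"
  by (intro borel_measurable_continuous_onI continuous_intros)

lemma integrable_lborel_pair_mult:
  fixes f g :: "real \<Rightarrow> real"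
  assumes f: "integrable lborel f" and g: "integrable lborel g"
  shows "integrable (lborel \<Otimes>\<^sub>M lborel) (\<lambda>(x, y). f x * g y)"
proof (rule lborel_pair.Fubini_integrable)
  have [measurable]: "f \<in> borel_measurable borel" "g \<in> borel_measurable borel"
    using f g by (auto dest: borel_measurable_integrable)
  show "(\<lambda>(x, y). f x * g y) \<in> borel_measurable (lborel \<Otimes>\<^sub>M lborel)"
    by measurable
  show "integrable lborel (\<lambda>x. \<integral>y. norm (case (x, y) of (x, y) \<Rightarrow> f x * g y) \<partial>lborel)"
    using f by (simp add: abs_mult)
  show "AE x in lborel. integrable lborel (\<lambda>y. case (x, y) of (x, y) \<Rightarrow> f x * g y)"
    using g by simp
qed

lemma norm_integral_le_nn_integral_norm:
  "ennreal (norm (integral\<^sup>L M f)) \<le> (\<integral>\<^sup>+x. ennreal (norm (f x)) \<partial>M)"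
  by (cases "integrable M f") (auto intro: integral_norm_bound_ennreal simp: not_integrable_integral_eq)

lemma weighted_Cauchy_Schwarz_nn_integral:
  fixes a b w :: "'a \<Rightarrow> real"
  assumes [measurable]: "a \<in> borel_measurable M" "b \<in> borel_measurable M" "w \<in> borel_measurable M"
    and a: "\<And>x. 0 \<le> a x" and b: "\<And>x. 0 \<le> b x" and w: "\<And>x. 0 < w x"
  shows "(\<integral>\<^sup>+x. ennreal (a x * b x) \<partial>M)\<^sup>2
           \<le> (\<integral>\<^sup>+x. ennreal ((a x)\<^sup>2 * w x) \<partial>M) * (\<integral>\<^sup>+x. ennreal ((b x)\<^sup>2 / w x) \<partial>M)"
proof -
  have "(\<integral>\<^sup>+x. ennreal (a x * sqrt (w x)) * ennreal (b x / sqrt (w x)) \<partial>M)\<^sup>2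
      \<le> (\<integral>\<^sup>+x. ennreal (a x * sqrt (w x)) ^ 2 \<partial>M) * (\<integral>\<^sup>+x. ennreal (b x / sqrt (w x)) ^ 2 \<partial>M)"
    by (rule Cauchy_Schwarz_nn_integral) measurable
  moreover have "ennreal (a x * sqrt (w x)) * ennreal (b x / sqrt (w x)) = ennreal (a x * b x)"
    and "ennreal (a x * sqrt (w x)) ^ 2 = ennreal ((a x)\<^sup>2 * w x)"
    and "ennreal (b x / sqrt (w x)) ^ 2 = ennreal ((b x)\<^sup>2 / w x)" for x
    using a[of x] b[of x] w[of x]
    by (simp_all add: ennreal_power flip: ennreal_mult) (simp_all add: power_mult_distrib power_divide)
  ultimately show ?thesis
    by simp
qed

lemma prob_densityD:
  assumes "prob_density g"
  shows "g \<in> borel_measurable borel" and "\<And>x. 0 \<le> g x"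
    and "integrable lborel g" and "integral\<^sup>L lborel g = 1"
  using assms unfolding prob_density_def by auto

lemma real_distribution_density:
  assumes "prob_density g"
  shows "real_distribution (density lborel g)"
proof -
  note g = prob_densityD[OF assms]
  have "emeasure (density lborel g) UNIV = ennreal (integral\<^sup>L lborel g)"
    using g by (simp add: emeasure_density nn_integral_eq_integral)
  then have "prob_space (density lborel g)"
    using g by (intro prob_spaceI) simp
  then show ?thesis
    by (simp add: real_distribution_def real_distribution_axioms_def)
qed

lemma char_fun_eq_char:
  assumes "prob_density g"
  shows "char_fun g = char (density lborel g)"
proof
  fix t
  have "char (density lborel g) t = (\<integral>x. g x *\<^sub>R iexp (t * x) \<partial>lborel)"
    unfolding char_def using prob_densityD[OF assms] by (intro integral_density) auto
  then show "char_fun g t = char (density lborel g) t"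
    unfolding char_fun_def by (simp add: scaleR_conv_of_real mult.commute)
qed

lemma borel_measurable_char_fun:
  "prob_density g \<Longrightarrow> char_fun g \<in> borel_measurable borel"
  using real_distribution.char_measurable[OF real_distribution_density] char_fun_eq_char by metis

lemma measure_density_prob_density:
  assumes f: "prob_density f" and [measurable]: "A \<in> sets borel"
  shows "measure (density lborel f) A = (\<integral>x. indicator A x * f x \<partial>lborel)"
proof -
  note f = prob_densityD[OF f]
  have [measurable]: "f \<in> borel_measurable borel"
    by (rule f(1))
  have "integrable lborel (\<lambda>x. indicator A x * f x)"
    using integrable_mult_indicator[OF _ f(3), of A] by (simp add: mult.commute)
  moreover have "emeasure (density lborel f) A = (\<integral>\<^sup>+x. ennreal (indicator A x * f x) \<partial>lborel)"
    by (subst emeasure_density) (auto intro!: nn_integral_cong split: split_indicator)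
  ultimately have "emeasure (density lborel f) A = ennreal (\<integral>x. indicator A x * f x \<partial>lborel)"
    using f(2) by (simp add: nn_integral_eq_integral)
  then show ?thesis
    using f(2) by (simp add: measure_def integral_nonneg_AE)
qed

section \<open>Tails of stretched exponentials\<close>

text \<open>Up to a factor \<open>1 + O(v powr (- r))\<close>, \<open>stretched_exp_tail c r v\<close> is the integral of
  \<open>exp (- c * t powr r)\<close> over \<open>t \<ge> v\<close>.\<close>

definition stretched_exp_tail :: "real \<Rightarrow> real \<Rightarrow> real \<Rightarrow> real" where
  "stretched_exp_tail c r v = v powr (1 - r) * exp (- c * v powr r) / (c * r)"

lemma has_real_derivative_stretched_exp_tail:
  assumes c: "c > 0" and r: "r > 0" and v: "v > 0"
  shows "((\<lambda>v. - stretched_exp_tail c r v) has_real_derivative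
           exp (- c * v powr r) * (1 - (1 - r) * v powr (- r) / (c * r))) (at v)"
proof -
  have d1: "((\<lambda>v. v powr (1 - r)) has_real_derivative (1 - r) * v powr (- r)) (at v)"
    using has_real_derivative_powr[OF v, of "1 - r"] by simp
  have d2: "((\<lambda>v. exp (- c * v powr r)) has_real_derivative
      exp (- c * v powr r) * (- c * (r * v powr (r - 1)))) (at v)"
    using v by (intro derivative_eq_intros has_real_derivative_powr) auto
  have D: "((\<lambda>v. - stretched_exp_tail c r v) has_real_derivative
      - (((1 - r) * v powr (- r) * exp (- c * v powr r)
         + v powr (1 - r) * (exp (- c * v powr r) * (- c * (r * v powr (r - 1))))) / (c * r))) (at v)"
    unfolding stretched_exp_tail_def using v c r by (intro derivative_eq_intros d1 d2) auto
  have "v powr (1 - r) * (exp (- c * v powr r) * (- c * (r * v powr (r - 1))))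
      = - (c * r) * exp (- c * v powr r) * (v powr (1 - r) * v powr (r - 1))"
    by (simp add: algebra_simps)
  also have "v powr (1 - r) * v powr (r - 1) = 1"
    using v by (simp flip: powr_add)
  finally have P: "v powr (1 - r) * (exp (- c * v powr r) * (- c * (r * v powr (r - 1))))
      = - (c * r) * exp (- c * v powr r)"
    by simp
  have E: "- (((1 - r) * v powr (- r) * exp (- c * v powr r) + - (c * r) * exp (- c * v powr r)) / (c * r))
      = exp (- c * v powr r) * (1 - (1 - r) * v powr (- r) / (c * r))"
    using c r by (simp add: field_simps)
  show ?thesis
    using D unfolding P E .
qed

lemma stretched_exp_tail_deriv_ge:
  fixes c r A v :: real
  defines "k \<equiv> max 0 (1 - r) / (c * r)"
  assumes c: "c > 0" and r: "r > 0" and A: "A > 0" and v: "A \<le> v"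
  shows "exp (- c * v powr r) * (1 - k * A powr (- r))
           \<le> exp (- c * v powr r) * (1 - (1 - r) * v powr (- r) / (c * r))"
proof -
  have "(1 - r) * v powr (- r) / (c * r) = (1 - r) / (c * r) * v powr (- r)"
    by simp
  also have "\<dots> \<le> k * v powr (- r)"
    unfolding k_def using c r by (intro mult_right_mono divide_right_mono) auto
  also have "\<dots> \<le> k * A powr (- r)"
    unfolding k_def using A v c r by (intro mult_left_mono powr_mono2') auto
  finally show ?thesis
    by (intro mult_left_mono) auto
qed

lemma nn_integral_stretched_exp_atLeast_le:
  fixes c r A :: real
  defines "k \<equiv> max 0 (1 - r) / (c * r)"
  assumes c: "c > 0" and r: "r > 0" and A: "A > 0" and kA: "k * A powr (- r) < 1"
  shows "(\<integral>\<^sup>+v. ennreal (exp (- c * v powr r)) * indicator {A..} v \<partial>lborel)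
           \<le> ennreal (stretched_exp_tail c r A / (1 - k * A powr (- r)))"
proof -
  define q where "q = 1 - k * A powr (- r)"
  define d where "d v = exp (- c * v powr r) * (1 - (1 - r) * v powr (- r) / (c * r))" for v
  have q: "q > 0"
    using kA by (simp add: q_def)
  have d_ge: "exp (- c * v powr r) * q \<le> d v" if "A \<le> v" for v
    unfolding d_def q_def k_def using stretched_exp_tail_deriv_ge[OF c r A that] by simp
  have "(\<integral>\<^sup>+v. ennreal (exp (- c * v powr r)) * indicator {A..} v \<partial>lborel)
      \<le> (\<integral>\<^sup>+v. ennreal (d v / q) * indicator {A..} v \<partial>lborel)"
    using d_ge q by (intro nn_integral_mono) (auto split: split_indicator simp: field_simps intro!: ennreal_leI)
  also have "\<dots> = ennreal (0 - (- stretched_exp_tail c r A / q))"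
  proof (rule nn_integral_FTC_atLeast)
    show "(\<lambda>v. d v / q) \<in> borel_measurable borel"
      unfolding d_def by measurable
    show "((\<lambda>v. - stretched_exp_tail c r v / q) has_real_derivative d v / q) (at v)" if "A \<le> v" for v
      unfolding d_def using that A by (intro DERIV_cdivide has_real_derivative_stretched_exp_tail c r) auto
    show "0 \<le> d v / q" if "A \<le> v" for v
      using d_ge[OF that] q by (intro divide_nonneg_pos) (auto intro: order.trans[rotated])
    have "(stretched_exp_tail c r \<longlongrightarrow> 0) at_top"
      unfolding stretched_exp_tail_def[abs_def] using c r by real_asymp
    then show "((\<lambda>v. - stretched_exp_tail c r v / q) \<longlongrightarrow> 0) at_top"
      using tendsto_divide[OF tendsto_minus tendsto_const, of "stretched_exp_tail c r" 0 at_top q] q by simp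
  qed
  finally show ?thesis
    by (simp add: q_def)
qed

lemma nn_integral_stretched_exp_abs_gt_le:
  fixes c r A :: real
  defines "k \<equiv> max 0 (1 - r) / (c * r)"
  assumes c: "c > 0" and r: "r > 0" and A: "A > 0" and kA: "k * A powr (- r) < 1"
  shows "(\<integral>\<^sup>+v. indicator {v. A < \<bar>v\<bar>} v * ennreal (exp (- c * \<bar>v\<bar> powr r)) \<partial>lborel)
           \<le> 2 * ennreal (stretched_exp_tail c r A / (1 - k * A powr (- r)))"
proof -
  define g where "g v = ennreal (exp (- c * v powr r)) * indicator {A..} v" for v
  have [measurable]: "g \<in> borel_measurable borel"
    unfolding g_def by measurable
  have "(\<integral>\<^sup>+v. indicator {v. A < \<bar>v\<bar>} v * ennreal (exp (- c * \<bar>v\<bar> powr r)) \<partial>lborel)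
      \<le> (\<integral>\<^sup>+v. g v + g (- v) \<partial>lborel)"
    using A by (intro nn_integral_mono) (auto simp: g_def split: split_indicator)
  also have "\<dots> = (\<integral>\<^sup>+v. g v \<partial>lborel) + (\<integral>\<^sup>+v. g (- v) \<partial>lborel)"
    by (intro nn_integral_add) auto
  also have "(\<integral>\<^sup>+v. g (- v) \<partial>lborel) = (\<integral>\<^sup>+v. g v \<partial>lborel)"
    using nn_integral_real_affine[of g "-1" 0] by simp
  also have "(\<integral>\<^sup>+v. g v \<partial>lborel) + (\<integral>\<^sup>+v. g v \<partial>lborel) = 2 * (\<integral>\<^sup>+v. g v \<partial>lborel)"
    by (simp add: mult_2)
  also have "\<dots> \<le> 2 * ennreal (stretched_exp_tail c r A / (1 - k * A powr (- r)))"
    unfolding g_def k_def using nn_integral_stretched_exp_atLeast_le[OF c r A] kA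
    by (intro mult_left_mono) (auto simp: k_def)
  finally show ?thesis .
qed

lemma nn_integral_stretched_exp_finite:
  fixes c r :: real
  assumes c: "c > 0" and r: "r > 0"
  shows "(\<integral>\<^sup>+v. ennreal (exp (- c * \<bar>v\<bar> powr r)) \<partial>lborel) < \<infinity>"
proof -
  define k where "k = max 0 (1 - r) / (c * r)"
  have "((\<lambda>A. A powr (- r)) \<longlongrightarrow> 0) at_top"
    using r by real_asymp
  then have "((\<lambda>A. k * A powr (- r)) \<longlongrightarrow> 0) at_top"
    by (rule tendsto_mult_right_zero)
  then have "\<forall>\<^sub>F A in at_top. k * A powr (- r) < 1"
    by (rule order_tendstoD) simp
  then have ev: "\<forall>\<^sub>F A in at_top. 0 < A \<and> k * A powr (- r) < 1"
    by (intro eventually_conj eventually_gt_at_top)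
  obtain A where A: "0 < A" "k * A powr (- r) < 1"
    using eventually_happens[OF ev] by (auto simp: trivial_limit_at_top_linorder)
  have "(\<integral>\<^sup>+v. ennreal (exp (- c * \<bar>v\<bar> powr r)) \<partial>lborel)
      \<le> (\<integral>\<^sup>+v. indicator {-A..A} v + indicator {v. A < \<bar>v\<bar>} v * ennreal (exp (- c * \<bar>v\<bar> powr r)) \<partial>lborel)"
    using c by (intro nn_integral_mono) (auto split: split_indicator)
  also have "\<dots> = emeasure lborel {-A..A}
      + (\<integral>\<^sup>+v. indicator {v. A < \<bar>v\<bar>} v * ennreal (exp (- c * \<bar>v\<bar> powr r)) \<partial>lborel)"
    by (subst nn_integral_add) simp_all
  also have "\<dots> \<le> ennreal (2 * A) + 2 * ennreal (stretched_exp_tail c r A / (1 - k * A powr (- r)))"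
    using nn_integral_stretched_exp_abs_gt_le[OF c r A(1)] A by (intro add_mono) (simp_all add: k_def)
  also have "\<dots> < \<infinity>"
    by (simp add: ennreal_mult_less_top)
  finally show ?thesis .
qed

lemma stretched_exp_tail_inverse:
  assumes "h > 0"
  shows "stretched_exp_tail c r (1 / h) = h powr (r - 1) * exp (- c / h powr r) / (c * r)"
proof -
  have "(1 / h) powr (1 - r) = h powr (r - 1)" and "(1 / h) powr r = 1 / h powr r"
    using assms by (simp_all add: powr_divide powr_minus_divide[symmetric])
  then show ?thesis
    by (simp add: stretched_exp_tail_def)
qed

section \<open>Fourier inversion for densities\<close>

text \<open>With the sign convention of \<^const>\<open>char_fun\<close>, the inverse Fourier transform is
  \<open>(1 / (2 * pi)) *\<^sub>R fourier_integral\<close>.\<close>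

definition fourier_integral :: "(real \<Rightarrow> complex) \<Rightarrow> real \<Rightarrow> complex" where
  "fourier_integral \<psi> x = (\<integral>t. iexp (- (t * x)) * \<psi> t \<partial>lborel)"

lemma borel_measurable_fourier_integral[measurable]:
  assumes [measurable]: "\<psi> \<in> borel_measurable borel"
  shows "fourier_integral \<psi> \<in> borel_measurable borel"
proof -
  have "(\<lambda>x. \<integral>t. iexp (- (t * x)) * \<psi> t \<partial>lborel) \<in> borel_measurable lborel"
    by (rule lborel.borel_measurable_lebesgue_integral) measurable
  then show ?thesis
    by (simp add: fourier_integral_def[abs_def])
qed

lemma integrable_iexp_mult:
  fixes \<psi> :: "real \<Rightarrow> complex"
  assumes "integrable lborel \<psi>"
  shows "integrable lborel (\<lambda>t. iexp (- (t * x)) * \<psi> t)"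
proof -
  have [measurable]: "\<psi> \<in> borel_measurable borel"
    using assms by (simp add: borel_measurable_integrable)
  show ?thesis
    using assms by (rule Bochner_Integration.integrable_bound) (auto simp: norm_mult)
qed

lemma norm_fourier_integral_le_nn_integral:
  "ennreal (cmod (fourier_integral \<psi> x)) \<le> (\<integral>\<^sup>+t. ennreal (cmod (\<psi> t)) \<partial>lborel)"
  using norm_integral_le_nn_integral_norm[of lborel "\<lambda>t. iexp (- (t * x)) * \<psi> t"]
  by (simp add: fourier_integral_def norm_mult)

lemma norm_fourier_integral_le_integral:
  "cmod (fourier_integral \<psi> x) \<le> (\<integral>t. cmod (\<psi> t) \<partial>lborel)"
  using integral_norm_bound[of lborel "\<lambda>t. iexp (- (t * x)) * \<psi> t"]
  by (simp add: fourier_integral_def norm_mult)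

lemma isCont_fourier_integral:
  assumes "integrable lborel \<psi>"
  shows "isCont (fourier_integral \<psi>) x"
proof -
  have [measurable]: "\<psi> \<in> borel_measurable borel"
    using assms by (simp add: borel_measurable_integrable)
  show ?thesis
    unfolding continuous_at_sequentially comp_def fourier_integral_def
    by (auto intro!: integral_dominated_convergence[where w="\<lambda>t. cmod (\<psi> t)"] tendsto_intros assms
             simp: norm_mult)
qed

lemma fourier_integral_add:
  assumes "integrable lborel \<phi>" and "integrable lborel \<psi>"
  shows "fourier_integral (\<lambda>t. \<phi> t + \<psi> t) x = fourier_integral \<phi> x + fourier_integral \<psi> x"
  unfolding fourier_integral_def distrib_left
  using assms by (intro Bochner_Integration.integral_add integrable_iexp_mult)

lemma continuous_eq_zero_if_Icc_integrals_zero: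
  fixes h :: "real \<Rightarrow> 'a::euclidean_space"
  assumes h: "continuous_on UNIV h"
    and zero: "\<And>a b. a \<le> b \<Longrightarrow> (\<integral>x. indicator {a..b} x *\<^sub>R h x \<partial>lborel) = 0"
  shows "h x = 0"
proof -
  define a b where "a = x - 1" and "b = x + 1"
  have ab: "a < b" "x \<in> {a..b}"
    by (auto simp: a_def b_def)
  have "((\<lambda>u. LBINT y=a..u. h y) has_vector_derivative h x) (at x within {a..b})"
    using ab h by (intro interval_integral_FTC2) (auto intro: continuous_on_subset)
  moreover have "((\<lambda>u. LBINT y=a..u. h y) has_vector_derivative 0) (at x within {a..b})"
  proof (rule has_vector_derivative_transform[OF ab(2)])
    show "((\<lambda>_. 0) has_vector_derivative 0) (at x within {a..b})"
      by (rule has_vector_derivative_const)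
    show "(LBINT y=a..u. h y) = 0" if "u \<in> {a..b}" for u
      using that zero[of a u] by (simp add: interval_integral_Icc set_lebesgue_integral_def)
  qed
  ultimately show ?thesis
    using ab vector_derivative_unique_within_closed_interval[of a b x] by (simp add: cbox_interval)
qed

lemma Icc_integral_iexp:
  fixes a b t :: real
  assumes ab: "a \<le> b" and t: "t \<noteq> 0"
  shows "(\<integral>x. indicator {a..b} x *\<^sub>R iexp (- (t * x)) \<partial>lborel)
           = (iexp (- (t * a)) - iexp (- (t * b))) / (\<i> * t)"
proof -
  have "(\<integral>x. indicator {a..b} x *\<^sub>R iexp (- (t * x)) \<partial>lborel) = (CLBINT x=a..b. iexp (- (t * x)))"
    using ab by (simp add: interval_integral_Icc set_lebesgue_integral_def)
  also have "\<dots> = \<i> * iexp (- (t * b)) / t - \<i> * iexp (- (t * a)) / t"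
  proof (rule interval_integral_FTC_finite)
    show "continuous_on {min a b..max a b} (\<lambda>x. iexp (- (t * x)))"
      by (intro continuous_intros)
    fix x
    have "((\<lambda>z. \<i> * exp (\<i> * (- t * z)) / t) has_field_derivative exp (\<i> * (- t * x))) (at (of_real x))"
      using t by (auto intro!: derivative_eq_intros simp: field_simps)
    from has_vector_derivative_real_field[OF this]
    show "((\<lambda>x. \<i> * iexp (- (t * x)) / t) has_vector_derivative iexp (- (t * x)))
        (at x within {min a b..max a b})"
      by simp
  qed
  also have "\<dots> = (iexp (- (t * a)) - iexp (- (t * b))) / (\<i> * t)"
    using t by (simp add: field_simps)
  finally show ?thesis .
qed

lemma norm_iexp_diff_quotient_le:
  fixes a b t :: real
  assumes "a \<le> b"
  shows "cmod ((iexp (- (t * a)) - iexp (- (t * b))) / (\<i> * t)) \<le> b - a"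
proof (cases "t = 0")
  case False
  have "(iexp (- (t * a)) - iexp (- (t * b))) / (\<i> * t) = (iexp ((- t) * b) - iexp ((- t) * a)) / (\<i> * (- t))"
    by (simp add: minus_divide_left minus_diff_eq)
  with Levy_Inversion_aux2[OF assms, of "- t"] False show ?thesis
    by simp
qed (use assms in simp)

lemma Icc_integral_fourier_integral:
  fixes \<psi> :: "real \<Rightarrow> complex"
  assumes \<psi>: "integrable lborel \<psi>" and ab: "a \<le> b"
  shows "(\<integral>x. indicator {a..b} x *\<^sub>R fourier_integral \<psi> x \<partial>lborel)
           = (\<integral>t. (iexp (- (t * a)) - iexp (- (t * b))) / (\<i> * t) * \<psi> t \<partial>lborel)"
proof -
  have [measurable]: "\<psi> \<in> borel_measurable borel"
    using \<psi> by (simp add: borel_measurable_integrable)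
  define F where "F t x = (indicator {a..b} x *\<^sub>R iexp (- (t * x))) * \<psi> t" for t x
  have F: "integrable (lborel \<Otimes>\<^sub>M lborel) (\<lambda>(t, x). F t x)"
  proof (rule Bochner_Integration.integrable_bound)
    show "integrable (lborel \<Otimes>\<^sub>M lborel) (\<lambda>(t, x). cmod (\<psi> t) * indicator {a..b} x)"
      using \<psi> ab by (intro integrable_lborel_pair_mult integrable_norm integrable_real_indicator) auto
  qed (auto simp: F_def norm_mult split: prod.splits split_indicator)
  have "(\<integral>t. (iexp (- (t * a)) - iexp (- (t * b))) / (\<i> * t) * \<psi> t \<partial>lborel)
      = (\<integral>t. \<integral>x. F t x \<partial>lborel \<partial>lborel)"
  proof (rule integral_cong_AE)
    show "AE t in lborel. (iexp (- (t * a)) - iexp (- (t * b))) / (\<i> * t) * \<psi> t = (\<integral>x. F t x \<partial>lborel)"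
      using AE_lborel_singleton[of 0]
    proof eventually_elim
      case (elim t)
      have "(\<integral>x. F t x \<partial>lborel) = (\<integral>x. indicator {a..b} x *\<^sub>R iexp (- (t * x)) \<partial>lborel) * \<psi> t"
        unfolding F_def by (rule integral_mult_left_zero)
      then show ?case
        unfolding Icc_integral_iexp[OF ab elim] ..
    qed
  qed (use F in \<open>auto intro!: lborel_pair.borel_measurable_lebesgue_integral\<close>)
  also have "\<dots> = (\<integral>x. \<integral>t. F t x \<partial>lborel \<partial>lborel)"
    using lborel_pair.Fubini_integral[OF F] by simp
  also have "\<dots> = (\<integral>x. indicator {a..b} x *\<^sub>R fourier_integral \<psi> x \<partial>lborel)"
    by (simp add: F_def fourier_integral_def)
  finally show ?thesis
    by simp
qed

text \<open>The bounds are written as the coercions in \<open>real_distribution.Levy_Inversion\<close>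
  elaborate \<open>-T..T\<close> for \<open>T :: nat\<close>.\<close>

lemma tendsto_CLBINT_symmetric:
  fixes G :: "real \<Rightarrow> complex"
  assumes G: "integrable lborel G"
  shows "(\<lambda>T::nat. CLBINT t=ereal (real_of_int (- int T))..ereal (real T). G t) \<longlonglongrightarrow> (\<integral>t. G t \<partial>lborel)"
proof -
  have [measurable]: "G \<in> borel_measurable borel"
    using G by (simp add: borel_measurable_integrable)
  have "(CLBINT t=ereal (real_of_int (- int T))..ereal (real T). G t)
      = (\<integral>t. indicator {- real T<..<real T} t *\<^sub>R G t \<partial>lborel)" for T :: nat
    by (simp add: interval_lebesgue_integral_def set_lebesgue_integral_def einterval_def
        greaterThanLessThan_def greaterThan_def lessThan_def Collect_conj_eq[symmetric])
  moreover have "(\<lambda>T::nat. \<integral>t. indicator {- real T<..<real T} t *\<^sub>R G t \<partial>lborel) \<longlonglongrightarrow> (\<integral>t. G t \<partial>lborel)"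
  proof (rule integral_dominated_convergence[where w="\<lambda>t. cmod (G t)"])
    show "AE t in lborel. (\<lambda>T. indicator {- real T<..<real T} t *\<^sub>R G t) \<longlonglongrightarrow> G t"
    proof (rule AE_I2)
      fix t :: real
      obtain N :: nat where "\<bar>t\<bar> < N"
        using reals_Archimedean2 by blast
      then have "\<forall>\<^sub>F T in sequentially. indicator {- real T<..<real T} t *\<^sub>R G t = G t"
        unfolding eventually_sequentially by (intro exI[of _ N]) (auto split: split_indicator)
      then show "(\<lambda>T. indicator {- real T<..<real T} t *\<^sub>R G t) \<longlonglongrightarrow> G t"
        by (rule tendsto_eventually)
    qed
  qed (auto simp: G split: split_indicator)
  ultimately show ?thesis
    by simp
qed

lemma (in real_distribution) Levy_Inversion_integrable:
  fixes a b :: real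
  assumes \<phi>: "integrable lborel (char M)" and ab: "a \<le> b"
    and "measure M {a} = 0" and "measure M {b} = 0"
  shows "complex_of_real (measure M {a<..b})
           = (1 / (2 * pi)) *\<^sub>R (\<integral>t. (iexp (- (t * a)) - iexp (- (t * b))) / (\<i> * t) * char M t \<partial>lborel)"
proof -
  define G where "G t = (iexp (- (t * a)) - iexp (- (t * b))) / (\<i> * t) * char M t" for t
  have "integrable lborel G"
  proof (rule Bochner_Integration.integrable_bound)
    show "integrable lborel (\<lambda>t. (b - a) * cmod (char M t))"
      using \<phi> by auto
    show "AE t in lborel. norm (G t) \<le> norm ((b - a) * cmod (char M t))"
    proof (rule AE_I2)
      fix t
      have "norm (G t) = cmod ((iexp (- (t * a)) - iexp (- (t * b))) / (\<i> * t)) * cmod (char M t)"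
        unfolding G_def by (rule norm_mult)
      also have "\<dots> \<le> (b - a) * cmod (char M t)"
        by (rule mult_right_mono[OF norm_iexp_diff_quotient_le[OF ab]]) simp
      finally show "norm (G t) \<le> norm ((b - a) * cmod (char M t))"
        by simp
    qed
  qed (unfold G_def, measurable)
  then have "(\<lambda>T::nat. complex_of_real (1 / (2 * pi)) * (CLBINT t=ereal (real_of_int (- int T))..ereal (real T). G t))
      \<longlonglongrightarrow> complex_of_real (1 / (2 * pi)) * (\<integral>t. G t \<partial>lborel)"
    by (intro tendsto_mult tendsto_const tendsto_CLBINT_symmetric)
  with Levy_Inversion[OF ab assms(3,4)] show ?thesis
    unfolding G_def by (simp add: LIMSEQ_unique scaleR_conv_of_real)
qed

lemma Icc_integral_fourier_inversion:
  assumes f: "prob_density f" and \<Phi>: "integrable lborel (char_fun f)" and ab: "a \<le> b"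
  shows "(\<integral>x. indicator {a..b} x *\<^sub>R complex_of_real (f x) \<partial>lborel)
           = (1 / (2 * pi)) *\<^sub>R (\<integral>x. indicator {a..b} x *\<^sub>R fourier_integral (char_fun f) x \<partial>lborel)"
proof -
  have [measurable]: "f \<in> borel_measurable borel"
    using prob_densityD(1)[OF f] .
  have null: "measure (density lborel f) {c} = 0" for c
  proof -
    have "(\<integral>x. indicator {c} x * f x \<partial>lborel) = 0"
      by (rule integral_eq_zero_AE) (use AE_lborel_singleton[of c] in eventually_elim, simp)
    then show ?thesis
      using measure_density_prob_density[OF f, of "{c}"] by simp
  qed
  have "(\<integral>x. indicator {a..b} x *\<^sub>R complex_of_real (f x) \<partial>lborel)
      = (\<integral>x. complex_of_real (indicator {a..b} x * f x) \<partial>lborel)"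
    by (simp add: scaleR_conv_of_real)
  also have "\<dots> = complex_of_real (\<integral>x. indicator {a..b} x * f x \<partial>lborel)"
    by (rule integral_complex_of_real)
  also have "(\<integral>x. indicator {a..b} x * f x \<partial>lborel) = measure (density lborel f) {a<..b}"
    using measure_density_prob_density[OF f, of "{a<..b}"] AE_lborel_singleton[of a]
    by (auto intro!: integral_cong_AE split: split_indicator elim!: eventually_mono)
  also have "complex_of_real \<dots>
      = (1 / (2 * pi)) *\<^sub>R (\<integral>x. indicator {a..b} x *\<^sub>R fourier_integral (char_fun f) x \<partial>lborel)"
    using real_distribution.Levy_Inversion_integrable[OF real_distribution_density[OF f] _ ab null null]
      Icc_integral_fourier_integral[OF \<Phi> ab] \<Phi>
    by (simp add: char_fun_eq_char[OF f])
  finally show ?thesis .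
qed

theorem fourier_inversion_density:
  assumes f: "prob_density f" and cont: "continuous_on UNIV f"
    and \<Phi>: "integrable lborel (char_fun f)"
  shows "complex_of_real (f x) = (1 / (2 * pi)) *\<^sub>R fourier_integral (char_fun f) x"
proof -
  define g where "g x = (1 / (2 * pi)) *\<^sub>R fourier_integral (char_fun f) x" for x
  have cont_g: "continuous_on UNIV g"
    unfolding g_def using \<Phi>
    by (intro continuous_at_imp_continuous_on ballI continuous_intros isCont_fourier_integral)
  have integrable_Icc: "integrable lborel (\<lambda>x. indicator {a..b} x *\<^sub>R h x)"
    if "continuous_on UNIV h" for a b and h :: "real \<Rightarrow> complex"
    using borel_integrable_atLeastAtMost'[OF continuous_on_subset[OF that]]
    by (simp add: set_integrable_def)
  have "complex_of_real (f x) - g x = 0"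
  proof (rule continuous_eq_zero_if_Icc_integrals_zero[where h="\<lambda>x. complex_of_real (f x) - g x"])
    show "continuous_on UNIV (\<lambda>x. complex_of_real (f x) - g x)"
      using cont cont_g by (intro continuous_intros)
    fix a b :: real
    assume ab: "a \<le> b"
    have "(\<integral>x. indicator {a..b} x *\<^sub>R g x \<partial>lborel)
        = (1 / (2 * pi)) *\<^sub>R (\<integral>x. indicator {a..b} x *\<^sub>R fourier_integral (char_fun f) x \<partial>lborel)"
      by (simp add: g_def flip: integral_scaleR_right)
    then show "(\<integral>x. indicator {a..b} x *\<^sub>R (complex_of_real (f x) - g x) \<partial>lborel) = 0"
      using Icc_integral_fourier_inversion[OF f \<Phi> ab] integrable_Icc[of "\<lambda>x. complex_of_real (f x)"]
        integrable_Icc[OF cont_g] cont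
      by (simp add: scaleR_diff_right continuous_on_of_real)
  qed
  then show ?thesis
    by (simp add: g_def)
qed

section \<open>A Plancherel inequality\<close>

definition gauss :: "real \<Rightarrow> real \<Rightarrow> real" where
  "gauss \<sigma> x = exp (- (x / \<sigma>)\<^sup>2 / 2)"

definition gauss_ft :: "real \<Rightarrow> real \<Rightarrow> real" where
  "gauss_ft \<sigma> w = \<sigma> * sqrt (2 * pi) * exp (- (\<sigma> * w)\<^sup>2 / 2)"

lemma gauss_nonneg: "0 \<le> gauss \<sigma> x"
  by (simp add: gauss_def)

lemma gauss_ft_nonneg: "\<sigma> > 0 \<Longrightarrow> 0 \<le> gauss_ft \<sigma> w"
  by (simp add: gauss_ft_def)

lemma borel_measurable_gauss[measurable]: "gauss \<sigma> \<in> borel_measurable borel"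
  unfolding gauss_def by measurable

lemma borel_measurable_gauss_ft[measurable]: "gauss_ft \<sigma> \<in> borel_measurable borel"
  unfolding gauss_ft_def by measurable

lemma integrable_gauss:
  assumes "\<sigma> > 0"
  shows "integrable lborel (gauss \<sigma>)"
proof -
  have "gauss \<sigma> = (\<lambda>x. (\<sigma> * sqrt (2 * pi)) * normal_density 0 \<sigma> x)"
    using assms
    by (auto simp: fun_eq_iff gauss_def normal_density_def real_sqrt_mult power_divide field_simps)
  then show ?thesis
    using assms by simp
qed

lemma nn_integral_gauss_ft:
  assumes \<sigma>: "\<sigma> > 0"
  shows "(\<integral>\<^sup>+w. ennreal (gauss_ft \<sigma> w) \<partial>lborel) = ennreal (2 * pi)"
proof -
  have "2 * pi * normal_density 0 (1 / \<sigma>) w = gauss_ft \<sigma> w" for w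
  proof -
    have "sqrt (2 * pi * (1 / \<sigma>)\<^sup>2) = sqrt (2 * pi) / \<sigma>"
      using \<sigma> by (simp add: real_sqrt_mult real_sqrt_divide power_divide)
    moreover have "- (w - 0)\<^sup>2 / (2 * (1 / \<sigma>)\<^sup>2) = - (\<sigma> * w)\<^sup>2 / 2"
      using \<sigma> by (simp add: power_divide field_simps power_mult_distrib)
    ultimately have "2 * pi * normal_density 0 (1 / \<sigma>) w = 2 * pi / (sqrt (2 * pi) / \<sigma>) * exp (- (\<sigma> * w)\<^sup>2 / 2)"
      unfolding normal_density_def by simp
    also have "2 * pi / (sqrt (2 * pi) / \<sigma>) = \<sigma> * sqrt (2 * pi)"
      using \<sigma> real_sqrt_mult_self[of "2 * pi"] by (simp add: field_simps)
    finally show ?thesis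
      unfolding gauss_ft_def .
  qed
  then have "(\<integral>\<^sup>+w. ennreal (gauss_ft \<sigma> w) \<partial>lborel) = (\<integral>\<^sup>+w. ennreal (2 * pi * normal_density 0 (1 / \<sigma>) w) \<partial>lborel)"
    by simp
  also have "\<dots> = ennreal (2 * pi)"
    using \<sigma> by (subst nn_integral_eq_integral) auto
  finally show ?thesis .
qed

lemma gauss_tendsto_1: "(\<lambda>n. gauss (real (Suc n)) x) \<longlonglongrightarrow> 1"
proof -
  have "(\<lambda>n. x / real (Suc n)) \<longlonglongrightarrow> 0"
    by (intro tendsto_divide_0[OF tendsto_const] filterlim_at_top_imp_at_infinity filterlim_real_sequentially
        filterlim_compose[OF _ filterlim_Suc])
  then have "(\<lambda>n. exp (- (x / real (Suc n))\<^sup>2 / 2)) \<longlonglongrightarrow> exp (- 0\<^sup>2 / 2)"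
    by (intro tendsto_intros) simp_all
  then show ?thesis
    by (simp add: gauss_def)
qed

lemma fourier_integral_gauss:
  assumes \<sigma>: "\<sigma> > 0"
  shows "fourier_integral (\<lambda>x. complex_of_real (gauss \<sigma> x)) w = gauss_ft \<sigma> w"
proof -
  have "fourier_integral (\<lambda>x. complex_of_real (gauss \<sigma> x)) w
      = \<bar>\<sigma>\<bar> *\<^sub>R (\<integral>y. iexp (- ((0 + \<sigma> * y) * w)) * complex_of_real (gauss \<sigma> (0 + \<sigma> * y)) \<partial>lborel)"
    unfolding fourier_integral_def using \<sigma> by (intro lborel_integral_real_affine) simp
  also have "(\<lambda>y. iexp (- ((0 + \<sigma> * y) * w)) * complex_of_real (gauss \<sigma> (0 + \<sigma> * y)))
      = (\<lambda>y. sqrt (2 * pi) *\<^sub>R (std_normal_density y *\<^sub>R iexp (- (w * \<sigma>) * y)))"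
    using \<sigma> by (auto simp: gauss_def std_normal_density_def scaleR_conv_of_real fun_eq_iff mult_ac)
  also have "(\<integral>y. sqrt (2 * pi) *\<^sub>R (std_normal_density y *\<^sub>R iexp (- (w * \<sigma>) * y)) \<partial>lborel)
      = sqrt (2 * pi) *\<^sub>R char std_normal_distribution (- (w * \<sigma>))"
    unfolding char_def integral_scaleR_right by (subst integral_density) auto
  also have "char std_normal_distribution (- (w * \<sigma>)) = exp (- (w * \<sigma>)\<^sup>2 / 2)"
    by (simp add: char_std_normal_distribution)
  finally show ?thesis
    using \<sigma> unfolding gauss_ft_def by (simp add: scaleR_conv_of_real mult_ac power_mult_distrib)
qed

lemma nn_integral_quadratic_convolution_le:
  fixes a k :: "real \<Rightarrow> ennreal"
  assumes [measurable]: "a \<in> borel_measurable borel" "k \<in> borel_measurable borel"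
  shows "(\<integral>\<^sup>+u. \<integral>\<^sup>+v. a u * a v * k (u - v) \<partial>lborel \<partial>lborel)
           \<le> (\<integral>\<^sup>+w. k w \<partial>lborel) * (\<integral>\<^sup>+u. a u ^ 2 \<partial>lborel)"
proof -
  define K where "K = (\<integral>\<^sup>+w. k w \<partial>lborel)"
  define Q where "Q = (\<integral>\<^sup>+u. a u ^ 2 \<partial>lborel)"
  have shift_v: "(\<integral>\<^sup>+v. k (u - v) \<partial>lborel) = K" for u
    using nn_integral_real_affine[of k "-1" u] by (simp add: K_def)
  have shift_u: "(\<integral>\<^sup>+u. k (u - v) \<partial>lborel) = K" for v
    using nn_integral_real_affine[of k 1 "-v"] by (simp add: K_def)
  have "2 * (\<integral>\<^sup>+u. \<integral>\<^sup>+v. a u * a v * k (u - v) \<partial>lborel \<partial>lborel)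
      = (\<integral>\<^sup>+u. \<integral>\<^sup>+v. (2 * a u * a v) * k (u - v) \<partial>lborel \<partial>lborel)"
    by (simp add: nn_integral_cmult lborel.borel_measurable_nn_integral mult.assoc)
  also have "\<dots> \<le> (\<integral>\<^sup>+u. \<integral>\<^sup>+v. (a u ^ 2 + a v ^ 2) * k (u - v) \<partial>lborel \<partial>lborel)"
    by (intro nn_integral_mono mult_right_mono sum_of_squares_ge_ennreal) simp
  also have "\<dots> = (\<integral>\<^sup>+u. \<integral>\<^sup>+v. a u ^ 2 * k (u - v) \<partial>lborel \<partial>lborel)
      + (\<integral>\<^sup>+u. \<integral>\<^sup>+v. a v ^ 2 * k (u - v) \<partial>lborel \<partial>lborel)"
    by (simp add: distrib_right nn_integral_add lborel.borel_measurable_nn_integral)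
  also have "(\<integral>\<^sup>+u. \<integral>\<^sup>+v. a u ^ 2 * k (u - v) \<partial>lborel \<partial>lborel) = K * Q"
    by (simp add: nn_integral_cmult shift_v Q_def nn_integral_multc mult.commute)
  also have "(\<integral>\<^sup>+u. \<integral>\<^sup>+v. a v ^ 2 * k (u - v) \<partial>lborel \<partial>lborel)
      = (\<integral>\<^sup>+v. \<integral>\<^sup>+u. a v ^ 2 * k (u - v) \<partial>lborel \<partial>lborel)"
    by (rule lborel_pair.Fubini') measurable
  also have "\<dots> = K * Q"
    by (simp add: nn_integral_cmult shift_u Q_def nn_integral_multc mult.commute)
  finally have "2 * (\<integral>\<^sup>+u. \<integral>\<^sup>+v. a u * a v * k (u - v) \<partial>lborel \<partial>lborel) \<le> 2 * (K * Q)"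
    by (simp add: mult_2)
  then show ?thesis
    by (simp add: ennreal_mult_le_mult_iff K_def Q_def)
qed

lemma cnj_fourier_integral_gauss:
  fixes \<psi> :: "real \<Rightarrow> complex"
  assumes \<psi>: "integrable lborel \<psi>" and \<sigma>: "\<sigma> > 0"
  shows "(\<integral>x. cnj (fourier_integral \<psi> x) * iexp (- (u * x)) * gauss \<sigma> x \<partial>lborel)
           = (\<integral>v. cnj (\<psi> v) * gauss_ft \<sigma> (u - v) \<partial>lborel)"
proof -
  have [measurable]: "\<psi> \<in> borel_measurable borel"
    using \<psi> by (simp add: borel_measurable_integrable)
  define K where "K x v = cnj (\<psi> v) * (iexp (- ((u - v) * x)) * gauss \<sigma> x)" for x v
  have K: "integrable (lborel \<Otimes>\<^sub>M lborel) (\<lambda>(x, v). K x v)"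
  proof (rule Bochner_Integration.integrable_bound)
    show "integrable (lborel \<Otimes>\<^sub>M lborel) (\<lambda>(x, v). gauss \<sigma> x * cmod (\<psi> v))"
      using \<psi> integrable_gauss[OF \<sigma>] by (intro integrable_lborel_pair_mult) auto
    show "(\<lambda>(x, v). K x v) \<in> borel_measurable (lborel \<Otimes>\<^sub>M lborel)"
      unfolding K_def by measurable
  qed (auto simp: K_def norm_mult gauss_nonneg split: prod.splits)
  have "cnj (fourier_integral \<psi> x) * iexp (- (u * x)) * gauss \<sigma> x = (\<integral>v. K x v \<partial>lborel)" for x
  proof -
    have cnj_eq: "cnj (fourier_integral \<psi> x) = (\<integral>v. iexp (v * x) * cnj (\<psi> v) \<partial>lborel)"
      unfolding fourier_integral_def Bochner_Integration.integral_cnj[symmetric] by (simp add: exp_cnj)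
    show ?thesis
      unfolding cnj_eq K_def integral_mult_left_zero[symmetric]
      by (intro Bochner_Integration.integral_cong refl) (simp add: exp_add[symmetric] algebra_simps)
  qed
  then have "(\<integral>x. cnj (fourier_integral \<psi> x) * iexp (- (u * x)) * gauss \<sigma> x \<partial>lborel)
      = (\<integral>x. \<integral>v. K x v \<partial>lborel \<partial>lborel)"
    by simp
  also have "\<dots> = (\<integral>v. \<integral>x. K x v \<partial>lborel \<partial>lborel)"
    using lborel_pair.Fubini_integral[OF K] by simp
  also have "\<dots> = (\<integral>v. cnj (\<psi> v) * gauss_ft \<sigma> (u - v) \<partial>lborel)"
  proof (rule Bochner_Integration.integral_cong[OF refl])
    fix v
    have "(\<integral>x. iexp (- ((u - v) * x)) * gauss \<sigma> x \<partial>lborel) = gauss_ft \<sigma> (u - v)"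
      using fourier_integral_gauss[OF \<sigma>, of "u - v"] by (simp only: fourier_integral_def mult.commute)
    then show "(\<integral>x. K x v \<partial>lborel) = cnj (\<psi> v) * gauss_ft \<sigma> (u - v)"
      unfolding K_def integral_mult_right_zero by simp
  qed
  finally show ?thesis .
qed

lemma integrable_gauss_damped_energy:
  fixes \<psi> :: "real \<Rightarrow> complex"
  assumes \<psi>: "integrable lborel \<psi>" and \<sigma>: "\<sigma> > 0"
  shows "integrable lborel (\<lambda>x. (cmod (fourier_integral \<psi> x))\<^sup>2 * gauss \<sigma> x)"
proof (rule Bochner_Integration.integrable_bound)
  define N where "N = (\<integral>t. cmod (\<psi> t) \<partial>lborel)"
  have [measurable]: "\<psi> \<in> borel_measurable borel"
    using \<psi> by (simp add: borel_measurable_integrable)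
  show "integrable lborel (\<lambda>x. N\<^sup>2 * gauss \<sigma> x)"
    using integrable_gauss[OF \<sigma>] by simp
  show "AE x in lborel. norm ((cmod (fourier_integral \<psi> x))\<^sup>2 * gauss \<sigma> x) \<le> norm (N\<^sup>2 * gauss \<sigma> x)"
    using norm_fourier_integral_le_integral[of \<psi>] gauss_nonneg[of \<sigma>]
    by (auto simp: N_def abs_mult intro!: mult_right_mono power_mono)
  show "(\<lambda>x. (cmod (fourier_integral \<psi> x))\<^sup>2 * gauss \<sigma> x) \<in> borel_measurable lborel"
    by measurable
qed

lemma integrable_gauss_damped_energy_kernel:
  fixes \<psi> :: "real \<Rightarrow> complex"
  assumes \<psi>: "integrable lborel \<psi>" and \<sigma>: "\<sigma> > 0"
  shows "integrable (lborel \<Otimes>\<^sub>M lborel)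
           (\<lambda>(x, u). cnj (fourier_integral \<psi> x) * (iexp (- (u * x)) * \<psi> u) * gauss \<sigma> x)"
proof (rule Bochner_Integration.integrable_bound)
  define N where "N = (\<integral>v. cmod (\<psi> v) \<partial>lborel)"
  have [measurable]: "\<psi> \<in> borel_measurable borel"
    using \<psi> by (simp add: borel_measurable_integrable)
  show "integrable (lborel \<Otimes>\<^sub>M lborel) (\<lambda>(x, u). (N * gauss \<sigma> x) * cmod (\<psi> u))"
    using \<psi> integrable_gauss[OF \<sigma>] by (intro integrable_lborel_pair_mult) auto
  have "cmod (cnj (fourier_integral \<psi> x) * (iexp (- (u * x)) * \<psi> u) * gauss \<sigma> x)
      \<le> N * gauss \<sigma> x * cmod (\<psi> u)" for x u
  proof -
    have "cmod (cnj (fourier_integral \<psi> x) * (iexp (- (u * x)) * \<psi> u) * gauss \<sigma> x)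
        = cmod (fourier_integral \<psi> x) * (gauss \<sigma> x * cmod (\<psi> u))"
      by (simp add: norm_mult abs_of_nonneg[OF gauss_nonneg] mult_ac)
    also have "\<dots> \<le> N * (gauss \<sigma> x * cmod (\<psi> u))"
      unfolding N_def by (intro mult_right_mono norm_fourier_integral_le_integral) (simp add: gauss_nonneg)
    finally show ?thesis
      by (simp add: mult_ac)
  qed
  moreover have "0 \<le> N"
    by (simp add: N_def)
  ultimately show "AE xu in lborel \<Otimes>\<^sub>M lborel.
      norm (case xu of (x, u) \<Rightarrow> cnj (fourier_integral \<psi> x) * (iexp (- (u * x)) * \<psi> u) * gauss \<sigma> x)
        \<le> norm (case xu of (x, u) \<Rightarrow> (N * gauss \<sigma> x) * cmod (\<psi> u))"
    by (intro AE_I2) (simp add: abs_mult abs_of_nonneg gauss_nonneg split: prod.splits)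
  show "(\<lambda>(x, u). cnj (fourier_integral \<psi> x) * (iexp (- (u * x)) * \<psi> u) * gauss \<sigma> x)
      \<in> borel_measurable (lborel \<Otimes>\<^sub>M lborel)"
    by measurable
qed

lemma gauss_damped_energy_eq:
  fixes \<psi> :: "real \<Rightarrow> complex"
  assumes \<psi>: "integrable lborel \<psi>" and \<sigma>: "\<sigma> > 0"
  shows "complex_of_real (\<integral>x. (cmod (fourier_integral \<psi> x))\<^sup>2 * gauss \<sigma> x \<partial>lborel)
           = (\<integral>u. \<psi> u * (\<integral>v. cnj (\<psi> v) * gauss_ft \<sigma> (u - v) \<partial>lborel) \<partial>lborel)"
proof -
  define D where "D = fourier_integral \<psi>"
  define K where "K x u = cnj (D x) * (iexp (- (u * x)) * \<psi> u) * gauss \<sigma> x" for x u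
  have K: "integrable (lborel \<Otimes>\<^sub>M lborel) (\<lambda>(x, u). K x u)"
    unfolding K_def D_def using \<psi> \<sigma> by (rule integrable_gauss_damped_energy_kernel)
  have "complex_of_real ((cmod (D x))\<^sup>2 * gauss \<sigma> x) = (\<integral>u. K x u \<partial>lborel)" for x
  proof -
    have "complex_of_real ((cmod (D x))\<^sup>2 * gauss \<sigma> x) = cnj (D x) * D x * gauss \<sigma> x"
      unfolding of_real_mult complex_norm_square by (simp add: mult_ac)
    also have "\<dots> = (\<integral>u. K x u \<partial>lborel)"
      unfolding K_def D_def fourier_integral_def by (simp add: integral_mult_right_zero integral_mult_left_zero)
    finally show ?thesis .
  qed
  then have "complex_of_real (\<integral>x. (cmod (D x))\<^sup>2 * gauss \<sigma> x \<partial>lborel) = (\<integral>x. \<integral>u. K x u \<partial>lborel \<partial>lborel)"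
    by (simp flip: integral_complex_of_real)
  also have "\<dots> = (\<integral>u. \<integral>x. K x u \<partial>lborel \<partial>lborel)"
    using lborel_pair.Fubini_integral[OF K] by simp
  also have "(\<lambda>u. \<integral>x. K x u \<partial>lborel) = (\<lambda>u. \<psi> u * (\<integral>x. cnj (D x) * iexp (- (u * x)) * gauss \<sigma> x \<partial>lborel))"
    unfolding K_def integral_mult_right_zero[symmetric]
    by (intro ext Bochner_Integration.integral_cong refl) (simp add: mult_ac)
  also have "\<dots> = (\<lambda>u. \<psi> u * (\<integral>v. cnj (\<psi> v) * gauss_ft \<sigma> (u - v) \<partial>lborel))"
    unfolding D_def cnj_fourier_integral_gauss[OF \<psi> \<sigma>] ..
  finally show ?thesis
    by (simp add: D_def)
qed

lemma nn_integral_gauss_damped_fourier_le: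
  fixes \<psi> :: "real \<Rightarrow> complex"
  assumes \<psi>: "integrable lborel \<psi>" and \<sigma>: "\<sigma> > 0"
  shows "(\<integral>\<^sup>+x. ennreal ((cmod (fourier_integral \<psi> x))\<^sup>2 * gauss \<sigma> x) \<partial>lborel)
           \<le> ennreal (2 * pi) * (\<integral>\<^sup>+u. ennreal ((cmod (\<psi> u))\<^sup>2) \<partial>lborel)"
proof -
  have [measurable]: "\<psi> \<in> borel_measurable borel"
    using \<psi> by (simp add: borel_measurable_integrable)
  define J where "J u = (\<integral>v. cnj (\<psi> v) * gauss_ft \<sigma> (u - v) \<partial>lborel)" for u
  have "(\<integral>\<^sup>+x. ennreal ((cmod (fourier_integral \<psi> x))\<^sup>2 * gauss \<sigma> x) \<partial>lborel)
      = ennreal (\<integral>x. (cmod (fourier_integral \<psi> x))\<^sup>2 * gauss \<sigma> x \<partial>lborel)"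
    using integrable_gauss_damped_energy[OF \<psi> \<sigma>] gauss_nonneg[of \<sigma>] by (intro nn_integral_eq_integral) auto
  also have "\<dots> = ennreal (cmod (\<integral>u. \<psi> u * J u \<partial>lborel))"
    using gauss_damped_energy_eq[OF \<psi> \<sigma>, folded J_def, symmetric] gauss_nonneg[of \<sigma>]
    by (simp add: integral_nonneg_AE)
  also have "\<dots> \<le> (\<integral>\<^sup>+u. ennreal (cmod (\<psi> u * J u)) \<partial>lborel)"
    by (rule norm_integral_le_nn_integral_norm)
  also have "\<dots> \<le> (\<integral>\<^sup>+u. \<integral>\<^sup>+v. ennreal (cmod (\<psi> u)) * ennreal (cmod (\<psi> v)) * ennreal (gauss_ft \<sigma> (u - v)) \<partial>lborel \<partial>lborel)"
  proof (rule nn_integral_mono)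
    fix u
    have "ennreal (cmod (J u)) \<le> (\<integral>\<^sup>+v. ennreal (cmod (\<psi> v)) * ennreal (gauss_ft \<sigma> (u - v)) \<partial>lborel)"
      using norm_integral_le_nn_integral_norm[of lborel "\<lambda>v. cnj (\<psi> v) * gauss_ft \<sigma> (u - v)"] gauss_ft_nonneg[OF \<sigma>]
      by (simp add: J_def norm_mult ennreal_mult)
    then show "ennreal (cmod (\<psi> u * J u))
        \<le> (\<integral>\<^sup>+v. ennreal (cmod (\<psi> u)) * ennreal (cmod (\<psi> v)) * ennreal (gauss_ft \<sigma> (u - v)) \<partial>lborel)"
      by (simp add: norm_mult ennreal_mult nn_integral_cmult mult.assoc mult.commute[of _ "ennreal (cmod (\<psi> u))"] mult_left_mono)
  qed
  also have "\<dots> \<le> ennreal (2 * pi) * (\<integral>\<^sup>+u. ennreal (cmod (\<psi> u)) ^ 2 \<partial>lborel)"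
    using nn_integral_quadratic_convolution_le[of "\<lambda>u. ennreal (cmod (\<psi> u))" "\<lambda>w. ennreal (gauss_ft \<sigma> w)"]
    by (simp add: nn_integral_gauss_ft[OF \<sigma>])
  finally show ?thesis
    by (simp add: ennreal_power)
qed

theorem plancherel_inequality:
  fixes \<psi> :: "real \<Rightarrow> complex"
  assumes \<psi>: "integrable lborel \<psi>"
  shows "(\<integral>\<^sup>+x. ennreal ((cmod (fourier_integral \<psi> x))\<^sup>2) \<partial>lborel)
           \<le> ennreal (2 * pi) * (\<integral>\<^sup>+u. ennreal ((cmod (\<psi> u))\<^sup>2) \<partial>lborel)"
proof -
  have [measurable]: "\<psi> \<in> borel_measurable borel"
    using \<psi> by (simp add: borel_measurable_integrable)
  define E where "E n = (\<integral>\<^sup>+x. ennreal ((cmod (fourier_integral \<psi> x))\<^sup>2 * gauss (real (Suc n)) x) \<partial>lborel)" for n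
  have "(\<integral>\<^sup>+x. ennreal ((cmod (fourier_integral \<psi> x))\<^sup>2) \<partial>lborel)
      = (\<integral>\<^sup>+x. liminf (\<lambda>n. ennreal ((cmod (fourier_integral \<psi> x))\<^sup>2 * gauss (real (Suc n)) x)) \<partial>lborel)"
  proof (rule nn_integral_cong)
    fix x
    have "(\<lambda>n. ennreal ((cmod (fourier_integral \<psi> x))\<^sup>2 * gauss (real (Suc n)) x))
        \<longlonglongrightarrow> ennreal ((cmod (fourier_integral \<psi> x))\<^sup>2 * 1)"
      by (intro tendsto_ennrealI tendsto_mult tendsto_const gauss_tendsto_1)
    then show "ennreal ((cmod (fourier_integral \<psi> x))\<^sup>2)
        = liminf (\<lambda>n. ennreal ((cmod (fourier_integral \<psi> x))\<^sup>2 * gauss (real (Suc n)) x))"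
      by (simp add: lim_imp_Liminf)
  qed
  also have "\<dots> \<le> liminf E"
    unfolding E_def by (rule nn_integral_liminf) measurable
  also have "\<dots> \<le> limsup E"
    by (rule Liminf_le_Limsup) simp
  also have "\<dots> \<le> ennreal (2 * pi) * (\<integral>\<^sup>+u. ennreal ((cmod (\<psi> u))\<^sup>2) \<partial>lborel)"
    using nn_integral_gauss_damped_fourier_le[OF \<psi>] by (intro Limsup_bounded) (simp add: E_def)
  finally show ?thesis .
qed

section \<open>The mean of the deconvolution estimator\<close>

lemma integrable_PhiK:
  assumes fe: "prob_density fe" and L2: "integrable lborel (\<lambda>u. (cmod (PhiK fe h u))\<^sup>2)"
  shows "integrable lborel (PhiK fe h)"
proof (rule Bochner_Integration.integrable_bound)
  have [measurable]: "char_fun fe \<in> borel_measurable borel"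
    using fe by (rule borel_measurable_char_fun)
  show "PhiK fe h \<in> borel_measurable lborel"
    unfolding PhiK_def[abs_def] by measurable
  show "integrable lborel (\<lambda>u. (indicator {-1..1} u + (cmod (PhiK fe h u))\<^sup>2) / 2 :: real)"
    using L2 by (intro integrable_divide integrable_add integrable_real_indicator) auto
  have "cmod z \<le> (1 + (cmod z)\<^sup>2) / 2" for z :: complex
    using zero_le_power2[of "cmod z - 1"] by (simp add: power2_eq_square algebra_simps)
  then show "AE u in lborel. norm (PhiK fe h u) \<le> norm ((indicator {-1..1} u + (cmod (PhiK fe h u))\<^sup>2) / 2 :: real)"
    by (intro AE_I2) (auto simp: PhiK_def split: split_indicator)
qed

lemma prob_space_law_Y:
  assumes "prob_density f" and "prob_density fe"
  shows "prob_space (law_Y f fe)"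
proof -
  have "prob_space (density lborel f \<Otimes>\<^sub>M density lborel fe)"
    using real_distribution_density[OF assms(1)] real_distribution_density[OF assms(2)]
    by (intro prob_space_pair) (auto simp: real_distribution_def)
  then show ?thesis
    unfolding law_Y_def by (rule prob_space.prob_space_distr) measurable
qed

lemma sets_law_Y[measurable_cong]: "sets (law_Y f fe) = sets borel"
  by (simp add: law_Y_def)

lemma integral_iexp_law_Y:
  assumes f: "prob_density f" and fe: "prob_density fe"
  shows "(\<integral>y. iexp (t * y) \<partial>law_Y f fe) = char_fun f t * char_fun fe t"
proof -
  interpret P: pair_prob_space "density lborel f" "density lborel fe"
    using real_distribution_density[OF f] real_distribution_density[OF fe]
    by (auto simp: pair_prob_space_def pair_sigma_finite_def real_distribution_def intro: prob_space_imp_sigma_finite)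
  have "(\<integral>y. iexp (t * y) \<partial>law_Y f fe)
      = (\<integral>p. iexp (t * (fst p + snd p)) \<partial>(density lborel f \<Otimes>\<^sub>M density lborel fe))"
    unfolding law_Y_def by (subst integral_distr) (auto simp: case_prod_beta)
  also have "\<dots> = (\<integral>x. \<integral>e. iexp (t * x) * iexp (t * e) \<partial>density lborel fe \<partial>density lborel f)"
  proof (subst P.integral_fst'[symmetric])
    show "integrable (density lborel f \<Otimes>\<^sub>M density lborel fe) (\<lambda>p. iexp (t * (fst p + snd p)))"
      by (rule P.P.integrable_const_bound[where B=1]) (auto simp: norm_exp_eq_Re)
  qed (simp add: distrib_left exp_add)
  also have "\<dots> = char (density lborel f) t * char (density lborel fe) t"
    unfolding char_def by (simp add: integral_mult_right_zero integral_mult_left_zero)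
  finally show ?thesis
    using char_fun_eq_char[OF f] char_fun_eq_char[OF fe] by simp
qed

lemma integral_Kn_law_Y:
  assumes f: "prob_density f" and fe: "prob_density fe"
    and L2: "integrable lborel (\<lambda>u. (cmod (PhiK fe h u))\<^sup>2)"
  shows "(\<integral>y. Kn fe h ((x - y) / h) \<partial>law_Y f fe)
           = (1 / (2 * pi)) *\<^sub>R (\<integral>u. iexp (- (u * x / h)) * PhiK fe h u * (char_fun f (u / h) * char_fun fe (u / h)) \<partial>lborel)"
proof -
  interpret Y: prob_space "law_Y f fe"
    using f fe by (rule prob_space_law_Y)
  interpret PY: pair_sigma_finite "law_Y f fe" lborel
    by (simp add: pair_sigma_finite_def Y.sigma_finite_measure_axioms lborel.sigma_finite_measure_axioms)
  have [measurable]: "char_fun fe \<in> borel_measurable borel"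
    using fe by (rule borel_measurable_char_fun)
  have PhiK: "integrable lborel (PhiK fe h)"
    using fe L2 by (rule integrable_PhiK)
  define F where "F y u = iexp (- (u * x / h)) * PhiK fe h u * iexp ((u / h) * y)" for y u
  have Kn_eq: "Kn fe h ((x - y) / h) = (1 / (2 * pi)) *\<^sub>R (\<integral>u. F y u \<partial>lborel)" for y
    unfolding Kn_def F_def
    by (auto intro!: Bochner_Integration.integral_cong simp: scaleR_conv_of_real exp_add[symmetric] algebra_simps diff_divide_distrib)
  have F: "integrable (law_Y f fe \<Otimes>\<^sub>M lborel) (\<lambda>(y, u). F y u)"
  proof (rule PY.Fubini_integrable)
    show "(\<lambda>(y, u). F y u) \<in> borel_measurable (law_Y f fe \<Otimes>\<^sub>M lborel)"
      unfolding F_def PhiK_def by measurable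
    have "(\<lambda>y. \<integral>u. norm (F y u) \<partial>lborel) = (\<lambda>y. \<integral>u. cmod (PhiK fe h u) \<partial>lborel)"
      by (simp add: F_def norm_mult)
    then show "integrable (law_Y f fe) (\<lambda>y. \<integral>u. norm (case (y, u) of (y, u) \<Rightarrow> F y u) \<partial>lborel)"
      by simp
    show "AE y in law_Y f fe. integrable lborel (\<lambda>u. case (y, u) of (y, u) \<Rightarrow> F y u)"
      using PhiK by (intro AE_I2) (auto intro!: Bochner_Integration.integrable_bound[OF PhiK] simp: F_def norm_mult PhiK_def)
  qed
  have "(\<integral>y. \<integral>u. F y u \<partial>lborel \<partial>law_Y f fe) = (\<integral>u. \<integral>y. F y u \<partial>law_Y f fe \<partial>lborel)"
    using PY.Fubini_integral[OF F] by simp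
  also have "\<dots> = (\<integral>u. iexp (- (u * x / h)) * PhiK fe h u * (char_fun f (u / h) * char_fun fe (u / h)) \<partial>lborel)"
    unfolding F_def integral_mult_right_zero integral_iexp_law_Y[OF f fe] ..
  finally show ?thesis
    unfolding Kn_eq by simp
qed

lemma E_fhat_eq_fourier_integral:
  assumes f: "prob_density f" and fe: "prob_density fe" and nz: "AE u in lborel. char_fun fe u \<noteq> 0"
    and L2: "integrable lborel (\<lambda>u. (cmod (PhiK fe h u))\<^sup>2)" and h: "h > 0"
  shows "E_fhat f fe h x
           = (1 / (2 * pi)) *\<^sub>R fourier_integral (\<lambda>v. indicator {v. \<bar>v\<bar> \<le> 1 / h} v *\<^sub>R char_fun f v) x"
proof -
  have [measurable]: "char_fun f \<in> borel_measurable borel" "char_fun fe \<in> borel_measurable borel"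
    using f fe by (simp_all add: borel_measurable_char_fun)
  define G where "G u = iexp (- (u * x / h)) * PhiK fe h u * (char_fun f (u / h) * char_fun fe (u / h))" for u
  have "(\<integral>u. G u \<partial>lborel) = \<bar>h\<bar> *\<^sub>R (\<integral>v. G (0 + h * v) \<partial>lborel)"
    using h by (intro lborel_integral_real_affine) simp
  also have "(\<integral>v. G (0 + h * v) \<partial>lborel) = fourier_integral (\<lambda>v. indicator {v. \<bar>v\<bar> \<le> 1 / h} v *\<^sub>R char_fun f v) x"
    unfolding fourier_integral_def
  proof (rule integral_cong_AE)
    show "AE v in lborel. G (0 + h * v) = iexp (- (v * x)) * indicator {v. \<bar>v\<bar> \<le> 1 / h} v *\<^sub>R char_fun f v"
      using nz
    proof eventually_elim
      case (elim v)
      have "\<bar>h * v\<bar> \<le> 1 \<longleftrightarrow> \<bar>v\<bar> \<le> 1 / h"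
        using h by (simp add: abs_mult field_simps)
      then show ?case
        using elim h by (auto simp: G_def PhiK_def field_simps split: split_indicator)
    qed
  qed (simp_all add: G_def PhiK_def)
  finally show ?thesis
    using h unfolding E_fhat_def integral_Kn_law_Y[OF f fe L2] G_def[symmetric]
    by (simp add: scaleR_conv_of_real field_simps)
qed

lemma E_fhat_bias_eq:
  assumes f: "prob_density f" and cont: "continuous_on UNIV f" and \<Phi>: "integrable lborel (char_fun f)"
    and fe: "prob_density fe" and nz: "AE u in lborel. char_fun fe u \<noteq> 0"
    and L2: "integrable lborel (\<lambda>u. (cmod (PhiK fe h u))\<^sup>2)" and h: "h > 0"
  shows "E_fhat f fe h x - complex_of_real (f x)
           = - ((1 / (2 * pi)) *\<^sub>R fourier_integral (\<lambda>v. indicator {v. 1 / h < \<bar>v\<bar>} v *\<^sub>R char_fun f v) x)"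
proof -
  define low where "low = (\<lambda>v. indicator {v. \<bar>v\<bar> \<le> 1 / h} v *\<^sub>R char_fun f v)"
  define high where "high = (\<lambda>v. indicator {v. 1 / h < \<bar>v\<bar>} v *\<^sub>R char_fun f v)"
  have [measurable]: "char_fun f \<in> borel_measurable borel"
    using f by (rule borel_measurable_char_fun)
  have "char_fun f = (\<lambda>v. low v + high v)"
    by (auto simp: low_def high_def split: split_indicator)
  moreover have "fourier_integral (\<lambda>v. low v + high v) x = fourier_integral low x + fourier_integral high x"
    using \<Phi> by (intro fourier_integral_add) (simp_all add: low_def high_def integrable_mult_indicator)
  ultimately have "fourier_integral (char_fun f) x = fourier_integral low x + fourier_integral high x"
    by simp
  then show ?thesis
    using fourier_inversion_density[OF f cont \<Phi>, of x] E_fhat_eq_fourier_integral[OF f fe nz L2 h, of x]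
    by (simp add: low_def high_def scaleR_add_right)
qed

section \<open>Bias bounds on the smoothness class\<close>

lemma class_A_prob_density: "f \<in> class_A \<alpha> r L \<Longrightarrow> prob_density f"
  unfolding class_A_def by simp

lemma class_A_char_fun_L1_sq_le:
  assumes f: "f \<in> class_A \<alpha> r L" and [measurable]: "S \<in> sets borel"
  shows "(\<integral>\<^sup>+v. indicator S v * ennreal (cmod (char_fun f v)) \<partial>lborel)\<^sup>2
           \<le> ennreal (2 * pi * L) * (\<integral>\<^sup>+v. indicator S v * ennreal (exp (- 2 * \<alpha> * \<bar>v\<bar> powr r)) \<partial>lborel)"
proof -
  have [measurable]: "char_fun f \<in> borel_measurable borel"
    using f by (intro borel_measurable_char_fun class_A_prob_density)
  define w where "w v = exp (2 * \<alpha> * \<bar>v\<bar> powr r)" for v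
  have "(\<integral>\<^sup>+v. indicator S v * ennreal (cmod (char_fun f v)) \<partial>lborel)\<^sup>2
      = (\<integral>\<^sup>+v. ennreal (indicator S v * cmod (char_fun f v) * indicator S v) \<partial>lborel)\<^sup>2"
    by (intro arg_cong[where f="\<lambda>x. x\<^sup>2"] nn_integral_cong) (auto split: split_indicator)
  also have "\<dots> \<le> (\<integral>\<^sup>+v. ennreal ((indicator S v * cmod (char_fun f v))\<^sup>2 * w v) \<partial>lborel)
        * (\<integral>\<^sup>+v. ennreal ((indicator S v)\<^sup>2 / w v) \<partial>lborel)"
    unfolding w_def by (rule weighted_Cauchy_Schwarz_nn_integral) auto
  also have "\<dots> \<le> ennreal (2 * pi * L) * (\<integral>\<^sup>+v. ennreal ((indicator S v)\<^sup>2 / w v) \<partial>lborel)"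
  proof (rule mult_right_mono)
    have "(\<integral>\<^sup>+v. ennreal ((indicator S v * cmod (char_fun f v))\<^sup>2 * w v) \<partial>lborel)
        \<le> (\<integral>\<^sup>+u. ennreal ((cmod (char_fun f u))\<^sup>2 * exp (2 * \<alpha> * (\<bar>u\<bar> powr r))) \<partial>lborel)"
      unfolding w_def by (intro nn_integral_mono ennreal_leI) (auto split: split_indicator)
    also have "\<dots> \<le> ennreal (2 * pi * L)"
      using f unfolding class_A_def by simp
    finally show "(\<integral>\<^sup>+v. ennreal ((indicator S v * cmod (char_fun f v))\<^sup>2 * w v) \<partial>lborel) \<le> ennreal (2 * pi * L)" .
  qed simp
  also have "(\<integral>\<^sup>+v. ennreal ((indicator S v)\<^sup>2 / w v) \<partial>lborel)
      = (\<integral>\<^sup>+v. indicator S v * ennreal (exp (- 2 * \<alpha> * \<bar>v\<bar> powr r)) \<partial>lborel)"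
    unfolding w_def by (intro nn_integral_cong) (auto split: split_indicator simp: exp_minus field_simps)
  finally show ?thesis .
qed

lemma integrable_char_fun_class_A:
  assumes "\<alpha> > 0" and "r > 0" and f: "f \<in> class_A \<alpha> r L"
  shows "integrable lborel (char_fun f)"
proof (rule integrableI_bounded)
  show "char_fun f \<in> borel_measurable lborel"
    using f by (simp add: borel_measurable_char_fun class_A_prob_density)
  have "(\<integral>\<^sup>+v. ennreal (norm (char_fun f v)) \<partial>lborel)\<^sup>2
      \<le> ennreal (2 * pi * L) * (\<integral>\<^sup>+v. ennreal (exp (- (2 * \<alpha>) * \<bar>v\<bar> powr r)) \<partial>lborel)"
    using class_A_char_fun_L1_sq_le[OF f, of UNIV] by simp
  also have "\<dots> < \<infinity>"
    using nn_integral_stretched_exp_finite[of "2 * \<alpha>" r] assms by (simp add: ennreal_mult_less_top)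
  finally show "(\<integral>\<^sup>+v. ennreal (norm (char_fun f v)) \<partial>lborel) < \<infinity>"
    by (simp add: power_less_top_ennreal)
qed

lemma class_A_bias_sup_le:
  fixes \<alpha> r L h :: real
  defines "k \<equiv> max 0 (1 - r) / (2 * \<alpha> * r)"
  assumes \<alpha>: "\<alpha> > 0" and r: "r > 0" and L: "0 \<le> L" and f: "f \<in> class_A \<alpha> r L"
    and h: "h > 0" and kh: "k * h powr r < 1"
  shows "(cmod ((1 / (2 * pi)) *\<^sub>R fourier_integral (\<lambda>v. indicator {v. 1 / h < \<bar>v\<bar>} v *\<^sub>R char_fun f v) x))\<^sup>2
           \<le> L / (2 * pi * \<alpha> * r) * h powr (r - 1) * exp (- 2 * \<alpha> / h powr r) / (1 - k * h powr r)"
proof -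
  define S where "S = {v. 1 / h < \<bar>v\<bar>}"
  define B where "B = stretched_exp_tail (2 * \<alpha>) r (1 / h) / (1 - k * h powr r)"
  have B: "B = h powr (r - 1) * exp (- 2 * \<alpha> / h powr r) / (2 * \<alpha> * r * (1 - k * h powr r))"
    unfolding B_def stretched_exp_tail_inverse[OF h] by simp
  have B_nonneg: "0 \<le> B"
    unfolding B using \<alpha> r kh by simp
  have "ennreal (cmod (fourier_integral (\<lambda>v. indicator S v *\<^sub>R char_fun f v) x))
      \<le> (\<integral>\<^sup>+v. indicator S v * ennreal (cmod (char_fun f v)) \<partial>lborel)"
    using norm_fourier_integral_le_nn_integral[of "\<lambda>v. indicator S v *\<^sub>R char_fun f v" x]
    by (simp add: indicator_mult_ennreal mult.commute)
  then have "ennreal (cmod (fourier_integral (\<lambda>v. indicator S v *\<^sub>R char_fun f v) x)) ^ 2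
      \<le> (\<integral>\<^sup>+v. indicator S v * ennreal (cmod (char_fun f v)) \<partial>lborel) ^ 2"
    by (rule power_mono_ennreal)
  also have "\<dots> \<le> ennreal (2 * pi * L) * (\<integral>\<^sup>+v. indicator S v * ennreal (exp (- 2 * \<alpha> * \<bar>v\<bar> powr r)) \<partial>lborel)"
    by (rule class_A_char_fun_L1_sq_le[OF f]) (simp add: S_def)
  also have "\<dots> \<le> ennreal (2 * pi * L) * (2 * ennreal B)"
    using nn_integral_stretched_exp_abs_gt_le[of "2 * \<alpha>" r "1 / h"] \<alpha> r h kh
    by (intro mult_left_mono) (simp_all add: B_def S_def k_def powr_divide powr_minus_divide)
  also have "\<dots> = ennreal (4 * pi * L * B)"
    using L B_nonneg by (simp add: ennreal_mult' ennreal_mult'' mult_ac)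
  finally have "ennreal ((cmod (fourier_integral (\<lambda>v. indicator S v *\<^sub>R char_fun f v) x))\<^sup>2)
      \<le> ennreal (4 * pi * L * B)"
    by (simp add: ennreal_power)
  then have "(cmod (fourier_integral (\<lambda>v. indicator S v *\<^sub>R char_fun f v) x))\<^sup>2 \<le> 4 * pi * L * B"
    using L B_nonneg by (subst (asm) ennreal_le_iff) auto
  moreover have "(cmod ((1 / (2 * pi)) *\<^sub>R z))\<^sup>2 = (1 / (2 * pi))\<^sup>2 * (cmod z)\<^sup>2" for z
    by (simp add: power_divide)
  ultimately have "(cmod ((1 / (2 * pi)) *\<^sub>R fourier_integral (\<lambda>v. indicator S v *\<^sub>R char_fun f v) x))\<^sup>2
      \<le> (1 / (2 * pi))\<^sup>2 * (4 * pi * L * B)"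
    by (simp add: mult_left_mono)
  also have "\<dots> = L / (2 * pi * \<alpha> * r) * h powr (r - 1) * exp (- 2 * \<alpha> / h powr r) / (1 - k * h powr r)"
    unfolding B using \<alpha> r kh by (simp add: field_simps power2_eq_square)
  finally show ?thesis
    by (simp add: S_def)
qed

lemma class_A_tail_L2_le:
  fixes \<alpha> r L A :: real
  assumes \<alpha>: "\<alpha> > 0" and r: "r > 0" and f: "f \<in> class_A \<alpha> r L" and A: "A > 0"
  shows "(\<integral>\<^sup>+v. ennreal ((cmod (indicator {v. A < \<bar>v\<bar>} v *\<^sub>R char_fun f v))\<^sup>2) \<partial>lborel)
           \<le> ennreal (exp (- 2 * \<alpha> * A powr r) * (2 * pi * L))"
proof -
  define e where "e = exp (- 2 * \<alpha> * A powr r)"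
  have [measurable]: "char_fun f \<in> borel_measurable borel"
    using f by (intro borel_measurable_char_fun class_A_prob_density)
  have le: "(cmod (indicator {v. A < \<bar>v\<bar>} v *\<^sub>R char_fun f v))\<^sup>2
      \<le> e * ((cmod (char_fun f v))\<^sup>2 * exp (2 * \<alpha> * \<bar>v\<bar> powr r))" for v
  proof (cases "A < \<bar>v\<bar>")
    case True
    then have "2 * \<alpha> * A powr r \<le> 2 * \<alpha> * \<bar>v\<bar> powr r"
      using A r \<alpha> by (intro mult_left_mono powr_mono2) auto
    then have "1 \<le> e * exp (2 * \<alpha> * \<bar>v\<bar> powr r)"
      unfolding e_def by (simp flip: exp_add)
    then show ?thesis
      using True mult_left_mono[of 1 "e * exp (2 * \<alpha> * \<bar>v\<bar> powr r)" "(cmod (char_fun f v))\<^sup>2"]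
      by (simp add: mult_ac)
  qed (simp add: e_def)
  have "(\<integral>\<^sup>+v. ennreal ((cmod (indicator {v. A < \<bar>v\<bar>} v *\<^sub>R char_fun f v))\<^sup>2) \<partial>lborel)
      \<le> (\<integral>\<^sup>+v. ennreal e * ennreal ((cmod (char_fun f v))\<^sup>2 * exp (2 * \<alpha> * (\<bar>v\<bar> powr r))) \<partial>lborel)"
    using le by (intro nn_integral_mono) (simp add: e_def flip: ennreal_mult)
  also have "\<dots> = ennreal e * (\<integral>\<^sup>+v. ennreal ((cmod (char_fun f v))\<^sup>2 * exp (2 * \<alpha> * (\<bar>v\<bar> powr r))) \<partial>lborel)"
    by (rule nn_integral_cmult) measurable
  also have "\<dots> \<le> ennreal e * ennreal (2 * pi * L)"
    using f unfolding class_A_def by (intro mult_left_mono) simp_all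
  also have "\<dots> = ennreal (e * (2 * pi * L))"
    by (rule ennreal_mult'[symmetric]) (simp add: e_def)
  finally show ?thesis
    by (simp add: e_def)
qed

lemma class_A_bias_L2_le:
  fixes \<alpha> r L h :: real
  assumes \<alpha>: "\<alpha> > 0" and r: "r > 0" and f: "f \<in> class_A \<alpha> r L" and h: "h > 0"
  shows "(\<integral>\<^sup>+x. ennreal ((cmod ((1 / (2 * pi)) *\<^sub>R
             fourier_integral (\<lambda>v. indicator {v. 1 / h < \<bar>v\<bar>} v *\<^sub>R char_fun f v) x))\<^sup>2) \<partial>lborel)
           \<le> ennreal (L * exp (- 2 * \<alpha> / h powr r))"
proof -
  define \<psi> where "\<psi> v = indicator {v. 1 / h < \<bar>v\<bar>} v *\<^sub>R char_fun f v" for v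
  define e where "e = exp (- 2 * \<alpha> / h powr r)"
  have \<psi>: "integrable lborel \<psi>"
    unfolding \<psi>_def using integrable_char_fun_class_A[OF \<alpha> r f] by (rule integrable_mult_indicator[rotated]) simp
  have tail: "(\<integral>\<^sup>+v. ennreal ((cmod (\<psi> v))\<^sup>2) \<partial>lborel) \<le> ennreal (e * (2 * pi * L))"
    using class_A_tail_L2_le[OF \<alpha> r f, of "1 / h"] h by (simp add: \<psi>_def e_def powr_divide)
  have "(cmod ((1 / (2 * pi)) *\<^sub>R z))\<^sup>2 = (1 / (2 * pi))\<^sup>2 * (cmod z)\<^sup>2" for z
    by (simp add: power_divide)
  then have "(\<integral>\<^sup>+x. ennreal ((cmod ((1 / (2 * pi)) *\<^sub>R fourier_integral \<psi> x))\<^sup>2) \<partial>lborel)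
      = (\<integral>\<^sup>+x. ennreal ((1 / (2 * pi))\<^sup>2) * ennreal ((cmod (fourier_integral \<psi> x))\<^sup>2) \<partial>lborel)"
    by (simp add: ennreal_mult)
  also have "\<dots> = ennreal ((1 / (2 * pi))\<^sup>2) * (\<integral>\<^sup>+x. ennreal ((cmod (fourier_integral \<psi> x))\<^sup>2) \<partial>lborel)"
    using \<psi> by (intro nn_integral_cmult) (simp add: borel_measurable_integrable)
  also have "\<dots> \<le> ennreal ((1 / (2 * pi))\<^sup>2) * (ennreal (2 * pi) * (\<integral>\<^sup>+u. ennreal ((cmod (\<psi> u))\<^sup>2) \<partial>lborel))"
    by (intro mult_left_mono plancherel_inequality \<psi>) simp
  also have "\<dots> \<le> ennreal ((1 / (2 * pi))\<^sup>2) * (ennreal (2 * pi) * ennreal (e * (2 * pi * L)))"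
    using tail by (intro mult_left_mono) simp_all
  also have "ennreal (2 * pi) * ennreal (e * (2 * pi * L)) = ennreal (2 * pi * (e * (2 * pi * L)))"
    by (rule ennreal_mult'[symmetric]) simp
  also have "ennreal ((1 / (2 * pi))\<^sup>2) * ennreal (2 * pi * (e * (2 * pi * L)))
      = ennreal ((1 / (2 * pi))\<^sup>2 * (2 * pi * (e * (2 * pi * L))))"
    by (rule ennreal_mult'[symmetric]) simp
  also have "(1 / (2 * pi))\<^sup>2 * (2 * pi * (e * (2 * pi * L))) = L * e"
    by (simp add: field_simps power2_eq_square)
  finally show ?thesis
    by (simp add: \<psi>_def e_def)
qed

theorem proposition1:
  fixes \<alpha> r L :: real and f fe :: "real \<Rightarrow> real"
  assumes "\<alpha> > 0" and "r > 0" and "L > 0"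
    and "f \<in> class_A \<alpha> r L"
    and "continuous_on UNIV f"
    and "prob_density fe"
    and "AE u in lborel. char_fun fe u \<noteq> 0"
    and "\<forall>h > 0. integrable lborel (\<lambda>u. (cmod (PhiK fe h u))\<^sup>2)"
  shows "(\<exists>g :: real \<Rightarrow> real. (g \<longlongrightarrow> 0) (at_right 0) \<and>
           (\<forall>\<^sub>F h in at_right 0. \<forall>x.
              (cmod (E_fhat f fe h x - complex_of_real (f x)))\<^sup>2
                \<le> L / (2 * pi * \<alpha> * r) * h powr (r - 1) * exp (- 2 * \<alpha> / h powr r) * (1 + g h)))
         \<and> (\<forall>h > 0. (\<integral>\<^sup>+x. ennreal ((cmod (E_fhat f fe h x - complex_of_real (f x)))\<^sup>2) \<partial>lborel)
                  \<le> ennreal (L * exp (- 2 * \<alpha> / h powr r)))"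
proof -
  define k where "k = max 0 (1 - r) / (2 * \<alpha> * r)"
  define g where "g h = 1 / (1 - k * h powr r) - 1" for h :: real
  have \<Phi>: "integrable lborel (char_fun f)"
    using assms(1,2,4) by (rule integrable_char_fun_class_A)
  have bias: "cmod (E_fhat f fe h x - complex_of_real (f x))
      = cmod ((1 / (2 * pi)) *\<^sub>R fourier_integral (\<lambda>v. indicator {v. 1 / h < \<bar>v\<bar>} v *\<^sub>R char_fun f v) x)"
    if "h > 0" for h x
    using E_fhat_bias_eq[OF class_A_prob_density[OF assms(4)] assms(5) \<Phi> assms(6,7) _ that] assms(8) that
    by (simp only: norm_minus_cancel)
  have kh: "((\<lambda>h. k * h powr r) \<longlongrightarrow> 0) (at_right 0)"
    using assms(2) by (intro tendsto_mult_right_zero) real_asymp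
  then have "(g \<longlongrightarrow> 1 / (1 - 0) - 1) (at_right 0)"
    unfolding g_def by (intro tendsto_intros) simp_all
  moreover have "\<forall>\<^sub>F h in at_right 0. k * h powr r < 1"
    using kh by (rule order_tendstoD) simp
  then have "\<forall>\<^sub>F h in at_right 0. 0 < h \<and> k * h powr r < 1"
    by (intro eventually_conj eventually_at_right_less)
  then have "\<forall>\<^sub>F h in at_right 0. \<forall>x. (cmod (E_fhat f fe h x - complex_of_real (f x)))\<^sup>2
      \<le> L / (2 * pi * \<alpha> * r) * h powr (r - 1) * exp (- 2 * \<alpha> / h powr r) * (1 + g h)"
    by eventually_elim (use class_A_bias_sup_le[OF assms(1,2) _ assms(4)] assms(3) bias in \<open>simp add: g_def k_def\<close>)
  moreover have "\<forall>h > 0. (\<integral>\<^sup>+x. ennreal ((cmod (E_fhat f fe h x - complex_of_real (f x)))\<^sup>2) \<partial>lborel)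
      \<le> ennreal (L * exp (- 2 * \<alpha> / h powr r))"
    using class_A_bias_L2_le[OF assms(1,2,4)] bias by simp
  ultimately show ?thesis
    by auto
qed

end
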